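(* Let $Q$ and $W$ satisfy the standing assumptions with $W=Y$, let $l\ge1$, and assume $Q$ is future unique w.r.t. $I^l_l$. Let $\mathcal R=\{(\zeta,V)\in\hat X^{I^l_l}\times\hat X^{l\triangledown}:V=\{\zeta\}\}$, $\mathcal R^l=\{(x,\hat x)\in X\times\hat X^{I^l_l}:\hat x\in E^{I^l_l}(x)\}$ and $\mathcal R^{l\triangledown}=\{(x,\hat x)\in X\times\hat X^{l\triangledown}:\hat x=E^{I^l_l}(x)\}$. Then: (i) $\mathcal B(\hat Q^{l\triangledown})=\hat{\mathcal B}^l$; (ii) $\mathcal R$ is a simulation relation from $\hat Q^{I^l_l}$ to $\hat Q^{l\triangledown}$ w.r.t. $Y$ and $\mathcal R^{-1}$ is a simulation relation from $\hat Q^{l\triangledown}$ to $\hat Q^{I^l_l}$ w.r.t. $Y$; (iii) $(\mathcal R^l)^{-1}$ is a simulation relation from $\hat Q^{I^l_l}$ to $Q$ w.r.t. $Y$ if and only if $(\mathcal R^{l\triangledown})^{-1}$ is a simulation relation from $\hat Q^{l\triangledown}$ to $Q$ w.r.t. $Y$; (iv) $Q$ is state-based asynchronously $l$-complete w.r.t. $I^l_l$ if and only if $\Phi^{l+1}=\Phi^l$.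
   Context: Strings and signals: $\diamond$ is a symbol not in any other set considered. For a set $A$ and $l\in\mathbb N_0$, $A^l$ is the set of strings of length $l$ over $A$, indexed $\zeta=\zeta(0)\cdots\zeta(l-1)$; $\lambda$ is the empty string and $\cdot$ denotes concatenation. For a map $w$ on $\mathbb Z$ (or a string) and integers $t_1\le t_2$, $w|_{[t_1,t_2]}=w(t_1)\cdots w(t_2)$ is the string of length $t_2-t_1+1$ (absolute time forgotten); if $t_2<t_1$ it is $\lambda$. For a set $\mathcal S$ of such maps or strings, $\mathcal S|_{[t_1,t_2]}=\{s|_{[t_1,t_2]}:s\in\mathcal S\}$. State machines: a state machine is $Q=(X,U,Y,\delta,X_0)$ with $X_0\subseteq X$, $\delta\subseteq X\times U\times Y\times X$. Let $H_\delta(x)=\{y:\exists u,x'.\,(x,u,y,x')\in\delta\}$, $F_\delta(x,u)=\{x':\exists y\in H_\delta(x).\,(x,u,y,x')\in\delta\}$, $T_\delta(x)=\bigcup_{u\in U}F_\delta(x,u)$. The full behavior $\mathcal B_f(Q)$ is the set of $(\mu,\nu,\xi)\in(U\times Y\times X)^{\mathbb N_0}$ with $\xi(0)\in X_0$ and $(\xi(k),\mu(k),\nu(k),\xi(k+1))\in\delta$ for all $k\in\mathbb N_0$. $Q$ is live and reachable if every $x\in X_0$ is $\xi(0)$ for some $(\mu,\nu,\xi)\in\mathcal B_f(Q)$ and every $x\in X$ is $\xi(k)$ for some such trajectory and some $k$. Standing assumptions: $Q=(X,U,Y,\delta,X_0)$ is live and reachable and satisfies $(x,u,y,x')\in\delta\iff(x'\in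 F_\delta(x,u)\wedge y\in H_\delta(x))$ for all $x,x'\in X,u\in U,y\in Y$; the external signal space $W$ is finite and either $W=U\times Y$ or $W=Y$ (here $W=Y$, with $\pi_W(u,y)=\pi_Y(u,y)=y$). Behaviors: for a state machine $Q'$ with input set $U$ and output set $Y$, $\mathcal B(Q')$ is the set of $w:\mathbb Z\to Y\cup\{\diamond\}$ such that for some $(\mu,\nu,\xi)\in\mathcal B_f(Q')$, $w(k)=\diamond$ for $k<0$ and $w(k)=\nu(k)$ for $k\ge0$. $\mathcal B_S(Q)$ is the set of pairs $(w,\xi)$ of maps on $\mathbb Z$ with $w(k)=\xi(k)=\diamond$ for $k<0$ and $(w(k),\xi(k))=(\nu(k),\xi'(k))$ for $k\ge0$, for some $(\mu,\nu,\xi')\in\mathcal B_f(Q)$. For a set $\mathcal B$ of maps on $\mathbb Z$, $\Pi_l(\mathcal B)=\bigcup_{k\in\mathbb N_0}\mathcal B|_{[k-l+1,k]}$. SAlCA: for $l\in\mathbb N_0$, $\hat{\mathcal B}^l$ is the set of $w:\mathbb Z\to W\cup\{\diamond\}$ with $w(k)=\diamond$ for $k<0$, $w(k)\in W$ for $k\ge0$, $w|_{[-l,0]}\in\mathcal B(Q)|_{[-l,0]}$ and $w|_{[k-l,k]}\in\Pi_{l+1}(\mathcal B(Q))$ for all $k\in\mathbb N_0$. Corresponding strings: for integers $a,b$ and $x\in X$, $E^{[a,b]}(x)=\{\zeta:\exists(w,\xi)\in\mathcal B_S(Q),k\in\mathbb N_0:\ \xi(k)=x,\ \zeta=w|_{[k+a,k+b]}\}$.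 For $l,m\in\mathbb N_0$ with $m\le l$, $I^l_m=[m-l,m-1]$; in particular $I^l_l=[0,l-1]$. Future uniqueness: $Q$ is future unique w.r.t. $I^l_m$ if for all $x\in X$ and $\zeta,\zeta'\in E^{I^l_m}(x)$, $\zeta|_{[l-m,l-1]}=\zeta'|_{[l-m,l-1]}$. State-based asynchronous $l$-completeness: $Q$ is state-based asynchronously $l$-complete w.r.t. $I^l_m$ if for all $x\in X$ and $\zeta\in\Pi_{l+1}(\mathcal B(Q))$, $\zeta|_{[0,l-1]}\in E^{I^l_m}(x)$ implies $\zeta\in E^{[m-l,m]}(x)$. Abstract state machine: $\hat Q^{I^l_m}=(\hat X^{I^l_m},U,Y,\hat\delta^{I^l_m},\hat X^{I^l_m}_0)$ with $\hat X^{I^l_m}=\bigcup_{x\in X}E^{I^l_m}(x)$, $\hat X^{I^l_m}_0=\bigcup_{x\in X_0}E^{I^l_m}(x)$, and $(\hat x,u,y,\hat x')\in\hat\delta^{I^l_m}$ iff (1) $\hat x'|_{[0,l-m-1]}=(\hat x|_{[0,l-m-1]}\cdot\pi_W(u,y))|_{[1,l-m]}$, (2) $\hat x|_{[l-m,l-1]}=(\pi_W(u,y)\cdot\hat x'|_{[l-m,l-2]})|_{[0,m-1]}$, and (3) there are $x,x'\in X$ with $\hat x\in E^{I^l_m}(x)$, $\hat x'\in E^{I^l_m}(x')$, $(x,u,y,x')\in\delta$. Quotient state machine (for $W=Y$): $\hat Q^{l\triangledown}=(\hat X^{l\triangledown},U,Y,\hat\delta^{l\triangledown},\hat X^{l\triangledown}_0)$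 with $\hat X^{l\triangledown}=\{E^{I^l_l}(x):x\in X\}$ (a set of subsets of $Y^l$), $\hat X^{l\triangledown}_0=\{E^{I^l_l}(x):x\in X_0\}$, and $(\hat x,u,y,\hat x')\in\hat\delta^{l\triangledown}$ iff there exist $x,x'\in X$ with $\hat x=E^{I^l_l}(x)$, $\hat x'=E^{I^l_l}(x')$ and $(x,u,y,x')\in\delta$. Partitions: for $\Xi\subseteq X$ let $T_\delta^{-1}(\Xi)=\{x\in X:T_\delta(x)\cap\Xi\neq\emptyset\}$ and for $V\subseteq Y$ let $H_\delta^{-1}(V)=\{x\in X:H_\delta(x)=V\}$. Set $\Phi^1=\{H_\delta^{-1}(V):V\subseteq Y\}\setminus\{\emptyset\}$ and, for $l\ge2$, let $\Phi^l$ be the partition of $X$ whose cells are the nonempty sets of the form $\Xi\cap\bigcap_{\Xi'\in\Phi^{l-1}}A_{\Xi'}$ with $\Xi\in\Phi^{l-1}$ and each $A_{\Xi'}\in\{T_\delta^{-1}(\Xi'),\,X\setminus T_\delta^{-1}(\Xi')\}$. Simulation relations: for state machines $Q_i=(X_i,U,Y,\delta_i,X_{0,i})$, $i=1,2$, and $V\in\{U\times Y,Y\}$, a relation $\mathcal R\subseteq X_1\times X_2$ is a simulation relation from $Q_1$ to $Q_2$ w.r.t. $V$ if (a) for every $x_1\in X_{0,1}$ there is $x_2\in X_{0,2}$ with $(x_1,x_2)\in\mathcal R$, and (b) for all $(x_1,x_2)\in\mathcal R$ and $(x_1,u_1,y_1,x_1')\in\delta_1$ there exist $u_2,y_2,x_2'$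 with $(x_2,u_2,y_2,x_2')\in\delta_2$, $(x_1',x_2')\in\mathcal R$ and $\pi_V(u_1,y_1)=\pi_V(u_2,y_2)$. $\mathcal R^{-1}=\{(x_2,x_1):(x_1,x_2)\in\mathcal R\}$. *)

theory Defs
  imports Main
begin

text \<open>State machine Q = (X,U,Y,delta,X0). The symbol diamond is modelled by None,
  a signal value w in W is modelled by Some w. Strings are lists.\<close>

record ('x,'u,'y) sm =
  Xs  :: "'x set"
  Us  :: "'u set"
  Ys  :: "'y set"
  dlt :: "('x \<times> 'u \<times> 'y \<times> 'x) set"
  X0s :: "'x set"

definition wf_sm :: "('x,'u,'y) sm \<Rightarrow> bool" where
  "wf_sm Q \<longleftrightarrow> X0s Q \<subseteq> Xs Q \<and> dlt Q \<subseteq> Xs Q \<times> Us Q \<times> Ys Q \<times> Xs Q"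

definition Hd :: "('x,'u,'y) sm \<Rightarrow> 'x \<Rightarrow> 'y set" where
  "Hd Q x = {y. \<exists>u x'. (x,u,y,x') \<in> dlt Q}"

definition Fd :: "('x,'u,'y) sm \<Rightarrow> 'x \<Rightarrow> 'u \<Rightarrow> 'x set" where
  "Fd Q x u = {x'. \<exists>y \<in> Hd Q x. (x,u,y,x') \<in> dlt Q}"

definition Td :: "('x,'u,'y) sm \<Rightarrow> 'x \<Rightarrow> 'x set" where
  "Td Q x = (\<Union>u \<in> Us Q. Fd Q x u)"

definition full_beh :: "('x,'u,'y) sm \<Rightarrow> ((nat \<Rightarrow> 'u) \<times> (nat \<Rightarrow> 'y) \<times> (nat \<Rightarrow> 'x)) set" where
  "full_beh Q = {(mu,nu,xi). (\<forall>k. mu k \<in> Us Q \<and> nu k \<in> Ys Q \<and> xi k \<in> Xs Q) \<and>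
      xi 0 \<in> X0s Q \<and> (\<forall>k. (xi k, mu k, nu k, xi (Suc k)) \<in> dlt Q)}"

definition live_reachable :: "('x,'u,'y) sm \<Rightarrow> bool" where
  "live_reachable Q \<longleftrightarrow>
     (\<forall>x \<in> X0s Q. \<exists>(mu,nu,xi) \<in> full_beh Q. xi 0 = x) \<and>
     (\<forall>x \<in> Xs Q. \<exists>(mu,nu,xi) \<in> full_beh Q. \<exists>k. xi k = x)"

definition standing :: "('x,'u,'y) sm \<Rightarrow> bool" where
  "standing Q \<longleftrightarrow> wf_sm Q \<and> live_reachable Q \<and> finite (Ys Q) \<and>
     (\<forall>x \<in> Xs Q. \<forall>u \<in> Us Q. \<forall>y \<in> Ys Q. \<forall>x' \<in> Xs Q.
        (x,u,y,x') \<in> dlt Q \<longleftrightarrow> (x' \<in> Fd Q x u \<and> y \<in> Hd Q x))"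

text \<open>Restriction w|[t1,t2] of a map on Z (empty if t2 < t1).\<close>
definition restr :: "(int \<Rightarrow> 'a) \<Rightarrow> int \<Rightarrow> int \<Rightarrow> 'a list" where
  "restr w t1 t2 = map (\<lambda>i. w (t1 + int i)) [0..<nat (t2 - t1 + 1)]"

text \<open>Restriction of a string zeta|[a,b] (empty if b < a).\<close>
definition sres :: "'a list \<Rightarrow> int \<Rightarrow> int \<Rightarrow> 'a list" where
  "sres zs a b = map (\<lambda>i. zs ! nat (a + int i)) [0..<nat (b - a + 1)]"

definition beh :: "('x,'u,'y) sm \<Rightarrow> (int \<Rightarrow> 'y option) set" where
  "beh Q = {w. \<exists>(mu,nu,xi) \<in> full_beh Q.
              (\<forall>k<0. w k = None) \<and> (\<forall>k\<ge>0. w k = Some (nu (nat k)))}"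

definition behS :: "('x,'u,'y) sm \<Rightarrow> ((int \<Rightarrow> 'y option) \<times> (int \<Rightarrow> 'x option)) set" where
  "behS Q = {(w,xi). \<exists>(mu,nu,xi') \<in> full_beh Q.
       (\<forall>k<0. w k = None \<and> xi k = None) \<and>
       (\<forall>k\<ge>0. w k = Some (nu (nat k)) \<and> xi k = Some (xi' (nat k)))}"

definition Pi_l :: "nat \<Rightarrow> (int \<Rightarrow> 'a) set \<Rightarrow> 'a list set" where
  "Pi_l l B = (\<Union>k::nat. (\<lambda>w. restr w (int k - int l + 1) (int k)) ` B)"

definition salca :: "('x,'u,'y) sm \<Rightarrow> nat \<Rightarrow> (int \<Rightarrow> 'y option) set" where
  "salca Q l = {w. (\<forall>k<0. w k = None) \<and> (\<forall>k\<ge>0. w k \<in> Some ` Ys Q) \<and>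
      restr w (- int l) 0 \<in> (\<lambda>v. restr v (- int l) 0) ` beh Q \<and>
      (\<forall>k\<ge>0. restr w (k - int l) k \<in> Pi_l (Suc l) (beh Q))}"

definition Ecs :: "('x,'u,'y) sm \<Rightarrow> int \<Rightarrow> int \<Rightarrow> 'x \<Rightarrow> 'y option list set" where
  "Ecs Q a b x = {zeta. \<exists>w xi k. (w,xi) \<in> behS Q \<and> xi (int k) = Some x \<and>
                     zeta = restr w (int k + a) (int k + b)}"

text \<open>E^{I^l_m}(x) with I^l_m = [m-l, m-1].\<close>
definition EI :: "('x,'u,'y) sm \<Rightarrow> nat \<Rightarrow> nat \<Rightarrow> 'x \<Rightarrow> 'y option list set" where
  "EI Q l m x = Ecs Q (int m - int l) (int m - 1) x"

definition future_unique :: "('x,'u,'y) sm \<Rightarrow> nat \<Rightarrow> nat \<Rightarrow> bool" where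
  "future_unique Q l m \<longleftrightarrow> (\<forall>x \<in> Xs Q. \<forall>zeta \<in> EI Q l m x. \<forall>zeta' \<in> EI Q l m x.
      sres zeta (int l - int m) (int l - 1) = sres zeta' (int l - int m) (int l - 1))"

definition async_complete :: "('x,'u,'y) sm \<Rightarrow> nat \<Rightarrow> nat \<Rightarrow> bool" where
  "async_complete Q l m \<longleftrightarrow> (\<forall>x \<in> Xs Q. \<forall>zeta \<in> Pi_l (Suc l) (beh Q).
      sres zeta 0 (int l - 1) \<in> EI Q l m x \<longrightarrow> zeta \<in> Ecs Q (int m - int l) (int m) x)"

text \<open>Abstract state machine hat Q^{I^l_m} (W = Y, so pi_W(u,y) = y).\<close>
definition absQ :: "('x,'u,'y) sm \<Rightarrow> nat \<Rightarrow> nat \<Rightarrow> ('y option list,'u,'y) sm" where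
  "absQ Q l m = \<lparr> Xs = (\<Union>x \<in> Xs Q. EI Q l m x), Us = Us Q, Ys = Ys Q,
     dlt = {(xh,u,y,xh').
        sres xh' 0 (int l - int m - 1) = sres (sres xh 0 (int l - int m - 1) @ [Some y]) 1 (int l - int m) \<and>
        sres xh (int l - int m) (int l - 1) = sres ([Some y] @ sres xh' (int l - int m) (int l - 2)) 0 (int m - 1) \<and>
        (\<exists>x x'. xh \<in> EI Q l m x \<and> xh' \<in> EI Q l m x' \<and> (x,u,y,x') \<in> dlt Q)},
     X0s = (\<Union>x \<in> X0s Q. EI Q l m x) \<rparr>"

definition quotQ :: "('x,'u,'y) sm \<Rightarrow> nat \<Rightarrow> ('y option list set,'u,'y) sm" where
  "quotQ Q l = \<lparr> Xs = {EI Q l l x | x. x \<in> Xs Q}, Us = Us Q, Ys = Ys Q,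
     dlt = {(xh,u,y,xh'). \<exists>x x'. xh = EI Q l l x \<and> xh' = EI Q l l x' \<and> (x,u,y,x') \<in> dlt Q},
     X0s = {EI Q l l x | x. x \<in> X0s Q} \<rparr>"

text \<open>Partitions Phi^l (only meaningful for l >= 1).\<close>
definition Tinv :: "('x,'u,'y) sm \<Rightarrow> 'x set \<Rightarrow> 'x set" where
  "Tinv Q Xi = {x \<in> Xs Q. Td Q x \<inter> Xi \<noteq> {}}"

definition Hinv :: "('x,'u,'y) sm \<Rightarrow> 'y set \<Rightarrow> 'x set" where
  "Hinv Q V = {x \<in> Xs Q. Hd Q x = V}"

definition phi_step :: "('x,'u,'y) sm \<Rightarrow> 'x set set \<Rightarrow> 'x set set" where
  "phi_step Q P = {C. C \<noteq> {} \<and> (\<exists>Xi \<in> P. \<exists>A.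
       (\<forall>Xi' \<in> P. A Xi' = Tinv Q Xi' \<or> A Xi' = Xs Q - Tinv Q Xi') \<and>
       C = Xi \<inter> (\<Inter>Xi' \<in> P. A Xi'))}"

fun Phi :: "('x,'u,'y) sm \<Rightarrow> nat \<Rightarrow> 'x set set" where
  "Phi Q 0 = {}"
| "Phi Q (Suc 0) = {Hinv Q V | V. V \<subseteq> Ys Q} - {{}}"
| "Phi Q (Suc (Suc n)) = phi_step Q (Phi Q (Suc n))"

definition simrel :: "('u \<times> 'y \<Rightarrow> 'v) \<Rightarrow> ('a,'u,'y) sm \<Rightarrow> ('b,'u,'y) sm \<Rightarrow> ('a \<times> 'b) set \<Rightarrow> bool" where
  "simrel piV Q1 Q2 R \<longleftrightarrow>
     (\<forall>x1 \<in> X0s Q1. \<exists>x2 \<in> X0s Q2. (x1,x2) \<in> R) \<and>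
     (\<forall>(x1,x2) \<in> R. \<forall>u1 y1 x1'. (x1,u1,y1,x1') \<in> dlt Q1 \<longrightarrow>
        (\<exists>u2 y2 x2'. (x2,u2,y2,x2') \<in> dlt Q2 \<and> (x1',x2') \<in> R \<and> piV (u1,y1) = piV (u2,y2)))"

definition piY :: "'u \<times> 'y \<Rightarrow> 'y" where "piY p = snd p"

end

theory Submission
  imports Defs
begin

text \<open>Future uniqueness means that every state \<open>x\<close> determines the string \<open>future x\<close> of its next
  \<open>l\<close> outputs, i.e. \<open>EI Q l l x = {future x}\<close>. Along a transition \<open>(x, u, y, x')\<close> the future of \<open>x\<close> is
  \<open>y\<close> followed by the future of \<open>x'\<close> without its last symbol. Hence both abstractions are images of
  \<open>Q\<close> under \<open>future\<close>, and \<open>\<zeta> \<mapsto> {\<zeta>}\<close> is an isomorphism between them; this gives (ii) and, by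
  composing simulation relations, (iii).
  The output windows of length \<open>l + 1\<close> of \<open>Q\<close> are exactly the strings \<open>y # future x'\<close> for transitions
  \<open>(x, u, y, x')\<close>, and along a trajectory of the quotient machine the state at time \<open>k\<close> is the
  singleton of the output window of length \<open>l\<close> at time \<open>k\<close>. So both sides of (i) consist of the output
  sequences that start like an initial state and all of whose windows of length \<open>l + 1\<close> occur in \<open>Q\<close>.
  Finally, for \<open>1 \<le> n \<le> l\<close> the partition \<open>\<Phi>\<^sup>n\<close> is the kernel of the first \<open>n\<close> symbols of \<open>future\<close>, and
  \<open>\<Phi>\<^sup>l\<^sup>+\<^sup>1\<close> is the kernel of \<open>x \<mapsto> (future x, future ` T(x))\<close>. So both \<open>\<Phi>\<^sup>l\<^sup>+\<^sup>1 = \<Phi>\<^sup>l\<close> and asynchronous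
  \<open>l\<close>-completeness say that states with the same future have successors with the same futures.\<close>

section \<open>Signals and windows\<close>

definition signal :: "(nat \<Rightarrow> 'y) \<Rightarrow> int \<Rightarrow> 'y option" where
  "signal nu k = (if k < 0 then None else Some (nu (nat k)))"

definition window :: "(nat \<Rightarrow> 'y) \<Rightarrow> nat \<Rightarrow> nat \<Rightarrow> 'y option list" where
  "window nu k n = map (\<lambda>i. Some (nu (k + i))) [0..<n]"

lemma length_restr [simp]: "length (restr w a b) = nat (b - a + 1)"
  by (simp add: restr_def)

lemma nth_restr: "i < nat (b - a + 1) \<Longrightarrow> restr w a b ! i = w (a + int i)"
  by (simp add: restr_def)

lemma length_window [simp]: "length (window nu k n) = n"
  by (simp add: window_def)

lemma nth_window [simp]: "i < n \<Longrightarrow> window nu k n ! i = Some (nu (k + i))"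
  by (simp add: window_def)

lemma window_Suc: "window nu k (Suc n) = Some (nu k) # window nu (Suc k) n"
  by (rule nth_equalityI) (auto simp: nth_Cons split: nat.split)

lemma take_window [simp]: "m \<le> n \<Longrightarrow> take m (window nu k n) = window nu k m"
  by (rule nth_equalityI) auto

lemma None_notin_window: "None \<notin> set (window nu k n)"
  by (auto simp: window_def)

lemma sres_0_eq_take: "nat (b + 1) \<le> length zs \<Longrightarrow> sres zs 0 b = take (nat (b + 1)) zs"
  by (rule nth_equalityI) (auto simp: sres_def)

lemma restr_signal:
  "restr (signal nu) (int j - int l) (int j) = replicate (l - j) None @ window nu (j - l) (Suc l - (l - j))"
proof (rule nth_equalityI)
  fix i assume "i < length (restr (signal nu) (int j - int l) (int j))"
  then have "i \<le> l" by simp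
  then have "nat (int j - int l + int i) = j - l + (i - (l - j))" if "\<not> i < l - j"
    using that by linarith
  then show "restr (signal nu) (int j - int l) (int j) ! i =
      (replicate (l - j) None @ window nu (j - l) (Suc l - (l - j))) ! i"
    using \<open>i \<le> l\<close> by (auto simp: nth_restr signal_def nth_append)
qed simp

lemma replicate_None_append_eq_iff:
  assumes "None \<notin> set xs" and "None \<notin> set ys"
  shows "replicate a None @ xs = replicate b None @ ys \<longleftrightarrow> a = b \<and> xs = ys"
  using assms
proof (induction a arbitrary: b)
  case 0
  then show ?case by (cases b) auto
next
  case (Suc a)
  then show ?case by (cases b) (auto simp: neq_Nil_conv)
qed

lemma take_Suc_eq_iff:
  assumes "1 \<le> n"
  shows "take (Suc n) xs = take (Suc n) ys \<longleftrightarrow> take n xs = take n ys \<and> take n (tl xs) = take n (tl ys)"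
proof -
  obtain m where n: "n = Suc m" using assms by (cases n) auto
  have shorter: "take m as = take m bs" if "take (Suc m) as = take (Suc m) bs" for as bs :: "'a list"
  proof -
    have "take m (take (Suc m) as) = take m (take (Suc m) bs)" using that by simp
    then show ?thesis by simp
  qed
  show ?thesis
    unfolding n by (cases xs; cases ys) (auto dest: shorter)
qed

section \<open>Behaviours\<close>

lemma mem_full_beh_iff:
  assumes "wf_sm Q"
  shows "(mu, nu, xi) \<in> full_beh Q \<longleftrightarrow> xi 0 \<in> X0s Q \<and> (\<forall>k. (xi k, mu k, nu k, xi (Suc k)) \<in> dlt Q)"
  using assms unfolding full_beh_def wf_sm_def by blast

lemma full_beh_dlt: "(mu, nu, xi) \<in> full_beh Q \<Longrightarrow> (xi k, mu k, nu k, xi (Suc k)) \<in> dlt Q"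
  unfolding full_beh_def by auto

lemma full_beh_X0s: "(mu, nu, xi) \<in> full_beh Q \<Longrightarrow> xi 0 \<in> X0s Q"
  unfolding full_beh_def by auto

lemma wf_quotQ: "wf_sm Q \<Longrightarrow> wf_sm (quotQ Q l)"
  unfolding wf_sm_def quotQ_def by auto

lemma mem_beh_iff: "w \<in> beh Q \<longleftrightarrow> (\<exists>mu nu xi. (mu, nu, xi) \<in> full_beh Q \<and> w = signal nu)"
  unfolding beh_def by (force simp: signal_def fun_eq_iff)

lemma beh_eq_image: "beh Q = signal ` {nu. \<exists>mu xi. (mu, nu, xi) \<in> full_beh Q}"
  by (rule set_eqI) (auto simp: mem_beh_iff)

lemma Ecs_0_eq:
  "Ecs Q 0 b x = {window nu k (nat (b + 1)) | mu nu xi k. (mu, nu, xi) \<in> full_beh Q \<and> xi k = x}"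
proof -
  have restr_eq: "restr (signal nu) (int k) (int k + b) = window nu k (nat (b + 1))"
    for nu :: "nat \<Rightarrow> 'y" and k
    by (rule nth_equalityI) (auto simp: nth_restr signal_def nat_add_distrib)
  have behS_iff: "(w, xi) \<in> behS Q \<longleftrightarrow> (\<exists>mu nu xi'. (mu, nu, xi') \<in> full_beh Q \<and> w = signal nu \<and>
      xi = (\<lambda>k. if k < 0 then None else Some (xi' (nat k))))" for w xi
    unfolding behS_def by (force simp: signal_def fun_eq_iff)
  show ?thesis
  proof (intro set_eqI iffI)
    fix z assume "z \<in> Ecs Q 0 b x"
    then obtain mu nu xi k where "(mu, nu, xi) \<in> full_beh Q" "xi k = x" "z = restr (signal nu) (int k) (int k + b)"
      unfolding Ecs_def behS_iff by auto
    then show "z \<in> {window nu k (nat (b + 1)) | mu nu xi k. (mu, nu, xi) \<in> full_beh Q \<and> xi k = x}"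
      by (auto simp: restr_eq)
  next
    fix z assume "z \<in> {window nu k (nat (b + 1)) | mu nu xi k. (mu, nu, xi) \<in> full_beh Q \<and> xi k = x}"
    then obtain mu nu xi k where traj: "(mu, nu, xi) \<in> full_beh Q" and "xi k = x"
      and z: "z = window nu k (nat (b + 1))"
      by blast
    define xi' where "xi' j = (if j < 0 then None else Some (xi (nat j)))" for j
    have "(signal nu, xi') \<in> behS Q"
      unfolding behS_iff xi'_def using traj by blast
    moreover have "xi' (int k) = Some x" using \<open>xi k = x\<close> by (simp add: xi'_def)
    moreover have "z = restr (signal nu) (int k + 0) (int k + b)" using z restr_eq[of nu k] by simp
    ultimately show "z \<in> Ecs Q 0 b x"
      unfolding Ecs_def by blast
  qed
qed

lemma EI_l_l_eq: "EI Q l l x = {window nu k l | mu nu xi k. (mu, nu, xi) \<in> full_beh Q \<and> xi k = x}"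
proof -
  have "nat (int l - 1 + 1) = l" by simp
  then show ?thesis
    unfolding EI_def by (simp add: Ecs_0_eq)
qed

definition windows :: "('x, 'u, 'y) sm \<Rightarrow> nat \<Rightarrow> 'y option list set" where
  "windows Q n = {window nu k n | mu nu xi k. (mu, nu, xi) \<in> full_beh Q}"

definition initial_windows :: "('x, 'u, 'y) sm \<Rightarrow> nat \<Rightarrow> 'y option list set" where
  "initial_windows Q n = {window nu 0 n | mu nu xi. (mu, nu, xi) \<in> full_beh Q}"

lemma windows_Suc_eq_Union_Ecs: "windows Q (Suc n) = (\<Union>x. Ecs Q 0 (int n) x)"
proof -
  have "nat (int n + 1) = Suc n" by simp
  then show ?thesis
    unfolding windows_def Ecs_0_eq by auto blast
qed

lemma take_mem_initial_windows: "s \<in> initial_windows Q n \<Longrightarrow> m \<le> n \<Longrightarrow> take m s \<in> initial_windows Q m"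
  unfolding initial_windows_def by fastforce

lemma mem_Ys_if_window_mem_windows:
  assumes "window nu k (Suc n) \<in> windows Q (Suc n)"
  shows "nu k \<in> Ys Q"
proof -
  obtain mu' nu' xi' k' where "(mu', nu', xi') \<in> full_beh Q" "window nu k (Suc n) = window nu' k' (Suc n)"
    using assms unfolding windows_def by blast
  then show ?thesis
    unfolding full_beh_def by (auto simp: window_Suc)
qed

lemma Pi_l_Suc_beh:
  "Pi_l (Suc l) (beh Q) = {restr (signal nu) (int j - int l) (int j) | mu nu xi j. (mu, nu, xi) \<in> full_beh Q}"
proof -
  have "int j - int (Suc l) + 1 = int j - int l" for j by simp
  then have "Pi_l (Suc l) (beh Q) = (\<Union>j. (\<lambda>w. restr w (int j - int l) (int j)) ` beh Q)"
    unfolding Pi_l_def by simp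
  also have "\<dots> = {restr (signal nu) (int j - int l) (int j) | mu nu xi j. (mu, nu, xi) \<in> full_beh Q}"
    unfolding beh_eq_image by blast
  finally show ?thesis .
qed

lemma restr_signal_mem_Pi_l_before_l:
  fixes nu :: "nat \<Rightarrow> 'y" and Q :: "('x, 'u, 'y) sm"
  assumes "j < l"
  shows "restr (signal nu) (int j - int l) (int j) \<in> Pi_l (Suc l) (beh Q) \<longleftrightarrow>
    window nu 0 (Suc j) \<in> initial_windows Q (Suc j)"
proof -
  have early: "restr (signal nu') (int j - int l) (int j) = replicate (l - j) None @ window nu' 0 (Suc j)"
    for nu' :: "nat \<Rightarrow> 'y"
    using assms restr_signal[of nu' j l] by (simp add: Suc_diff_le)
  show ?thesis
  proof
    assume "restr (signal nu) (int j - int l) (int j) \<in> Pi_l (Suc l) (beh Q)"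
    then obtain mu' nu' xi' j' where traj: "(mu', nu', xi') \<in> full_beh Q"
      and "restr (signal nu) (int j - int l) (int j) = restr (signal nu') (int j' - int l) (int j')"
      unfolding Pi_l_Suc_beh by blast
    then have eq: "replicate (l - j) None @ window nu 0 (Suc j) =
        replicate (l - j') None @ window nu' (j' - l) (Suc l - (l - j'))"
      using early[of nu] restr_signal[of nu' j' l] by simp
    then have "l - j = l - j'" and win: "window nu 0 (Suc j) = window nu' (j' - l) (Suc l - (l - j'))"
      by (simp_all add: replicate_None_append_eq_iff None_notin_window)
    then have "j' = j" using assms by linarith
    with win assms have "window nu 0 (Suc j) = window nu' 0 (Suc j)" by (simp add: Suc_diff_le)
    then show "window nu 0 (Suc j) \<in> initial_windows Q (Suc j)"
      unfolding initial_windows_def using traj by blast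
  next
    assume "window nu 0 (Suc j) \<in> initial_windows Q (Suc j)"
    then obtain mu' nu' xi' where "(mu', nu', xi') \<in> full_beh Q" "window nu 0 (Suc j) = window nu' 0 (Suc j)"
      unfolding initial_windows_def by blast
    then have "restr (signal nu) (int j - int l) (int j) = restr (signal nu') (int j - int l) (int j)"
      by (simp only: early)
    then show "restr (signal nu) (int j - int l) (int j) \<in> Pi_l (Suc l) (beh Q)"
      unfolding Pi_l_Suc_beh using \<open>(mu', nu', xi') \<in> full_beh Q\<close> by blast
  qed
qed

lemma restr_signal_mem_Pi_l_after_l:
  fixes nu :: "nat \<Rightarrow> 'y" and Q :: "('x, 'u, 'y) sm"
  assumes "l \<le> j"
  shows "restr (signal nu) (int j - int l) (int j) \<in> Pi_l (Suc l) (beh Q) \<longleftrightarrow>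
    window nu (j - l) (Suc l) \<in> windows Q (Suc l)"
proof
  assume "restr (signal nu) (int j - int l) (int j) \<in> Pi_l (Suc l) (beh Q)"
  then obtain mu' nu' xi' j' where traj: "(mu', nu', xi') \<in> full_beh Q"
    and "restr (signal nu) (int j - int l) (int j) = restr (signal nu') (int j' - int l) (int j')"
    unfolding Pi_l_Suc_beh by blast
  then have "replicate 0 None @ window nu (j - l) (Suc l) =
      replicate (l - j') None @ window nu' (j' - l) (Suc l - (l - j'))"
    using assms by (simp add: restr_signal)
  then have "l - j' = 0" and "window nu (j - l) (Suc l) = window nu' (j' - l) (Suc l - (l - j'))"
    by (simp_all only: replicate_None_append_eq_iff None_notin_window not_False_eq_True)
  then have "window nu (j - l) (Suc l) = window nu' (j' - l) (Suc l)"
    by simp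
  then show "window nu (j - l) (Suc l) \<in> windows Q (Suc l)"
    unfolding windows_def using traj by blast
next
  assume "window nu (j - l) (Suc l) \<in> windows Q (Suc l)"
  then obtain mu' nu' xi' k where traj: "(mu', nu', xi') \<in> full_beh Q"
    and eq: "window nu (j - l) (Suc l) = window nu' k (Suc l)"
    unfolding windows_def by blast
  have "restr (signal nu') (int (k + l) - int l) (int (k + l)) = window nu' k (Suc l)"
    using restr_signal[of nu' "k + l" l] by simp
  moreover have "restr (signal nu) (int j - int l) (int j) = window nu (j - l) (Suc l)"
    using restr_signal[of nu j l] assms by simp
  ultimately have "restr (signal nu) (int j - int l) (int j) = restr (signal nu') (int (k + l) - int l) (int (k + l))"
    using eq by simp
  then show "restr (signal nu) (int j - int l) (int j) \<in> Pi_l (Suc l) (beh Q)"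
    unfolding Pi_l_Suc_beh using traj by blast
qed

lemma length_Pi_l: "\<zeta> \<in> Pi_l n B \<Longrightarrow> length \<zeta> = n"
  unfolding Pi_l_def by auto

lemma windows_subset_Pi_l: "windows Q (Suc l) \<subseteq> Pi_l (Suc l) (beh Q)"
proof
  fix s assume "s \<in> windows Q (Suc l)"
  then obtain mu nu xi k where "(mu, nu, xi) \<in> full_beh Q" and s: "s = window nu k (Suc l)"
    unfolding windows_def by blast
  moreover have "restr (signal nu) (int (k + l) - int l) (int (k + l)) = window nu k (Suc l)"
    using restr_signal[of nu "k + l" l] by simp
  ultimately show "s \<in> Pi_l (Suc l) (beh Q)"
    unfolding Pi_l_Suc_beh by (metis (mono_tags, lifting) mem_Collect_eq)
qed

lemma mem_windows_if_mem_Pi_l: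
  assumes "\<zeta> \<in> Pi_l (Suc l) (beh Q)" and "hd \<zeta> \<noteq> None"
  shows "\<zeta> \<in> windows Q (Suc l)"
proof -
  obtain mu nu xi j where "(mu, nu, xi) \<in> full_beh Q" and \<zeta>: "\<zeta> = restr (signal nu) (int j - int l) (int j)"
    using assms(1) unfolding Pi_l_Suc_beh by blast
  have "l \<le> j"
  proof (rule ccontr)
    assume "\<not> l \<le> j"
    then have "hd \<zeta> = None" unfolding \<zeta> restr_signal by simp
    with assms(2) show False ..
  qed
  then have "window nu (j - l) (Suc l) \<in> windows Q (Suc l)"
    using assms(1) restr_signal_mem_Pi_l_after_l unfolding \<zeta> by blast
  moreover have "\<zeta> = window nu (j - l) (Suc l)"
    using \<open>l \<le> j\<close> unfolding \<zeta> restr_signal by simp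
  ultimately show ?thesis by simp
qed

definition windows_admissible :: "('x, 'u, 'y) sm \<Rightarrow> nat \<Rightarrow> (nat \<Rightarrow> 'y) \<Rightarrow> bool" where
  "windows_admissible Q l nu \<longleftrightarrow>
    window nu 0 l \<in> initial_windows Q l \<and> (\<forall>k. window nu k (Suc l) \<in> windows Q (Suc l))"

lemma salca_subset:
  fixes Q :: "('x, 'u, 'y) sm"
  assumes "1 \<le> l"
  shows "salca Q l \<subseteq> signal ` Collect (windows_admissible Q l)"
proof
  fix w assume "w \<in> salca Q l"
  then have w_neg: "\<And>k. k < 0 \<Longrightarrow> w k = None"
    and w_nonneg: "\<And>k. k \<ge> 0 \<Longrightarrow> w k \<in> Some ` Ys Q"
    and w_windows: "\<And>j. restr w (int j - int l) (int j) \<in> Pi_l (Suc l) (beh Q)"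
    unfolding salca_def by auto
  define nu where "nu n = the (w (int n))" for n
  have w: "w = signal nu"
  proof
    fix k
    show "w k = signal nu k"
      using w_neg[of k] w_nonneg[of k] by (cases "k < 0") (auto simp: signal_def nu_def)
  qed
  have "l - 1 < l" using assms by simp
  then have "window nu 0 (Suc (l - 1)) \<in> initial_windows Q (Suc (l - 1))"
    using restr_signal_mem_Pi_l_before_l w_windows[of "l - 1"] unfolding w by blast
  moreover have "window nu k (Suc l) \<in> windows Q (Suc l)" for k
    using restr_signal_mem_Pi_l_after_l[of l "k + l"] w_windows[of "k + l"] unfolding w by auto
  ultimately show "w \<in> signal ` Collect (windows_admissible Q l)"
    using assms w unfolding windows_admissible_def by auto
qed

text \<open>The windows ending before time \<open>l\<close> start with \<open>\<diamond>\<close>s and pin down a prefix of an initial output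
  string, so the separate initial condition in \<open>salca\<close> is redundant.\<close>
lemma signal_mem_salca:
  fixes Q :: "('x, 'u, 'y) sm"
  assumes "1 \<le> l" and "windows_admissible Q l nu"
  shows "signal nu \<in> salca Q l"
proof -
  have initial: "window nu 0 l \<in> initial_windows Q l"
    and windows: "\<And>k. window nu k (Suc l) \<in> windows Q (Suc l)"
    using assms(2) unfolding windows_admissible_def by auto
  have initial_prefix: "window nu 0 (Suc j) \<in> initial_windows Q (Suc j)" if "j < l" for j
    using take_mem_initial_windows[OF initial, of "Suc j"] that by simp
  have "restr (signal nu) (int j - int l) (int j) \<in> Pi_l (Suc l) (beh Q)" for j
  proof (cases "j < l")
    case True
    then show ?thesis
      using initial_prefix restr_signal_mem_Pi_l_before_l by blast
  next
    case False
    then show ?thesis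
      using windows restr_signal_mem_Pi_l_after_l by (metis not_less)
  qed
  then have "restr (signal nu) (k - int l) k \<in> Pi_l (Suc l) (beh Q)" if "k \<ge> 0" for k
    using that by (metis nonneg_int_cases)
  moreover have "restr (signal nu) (- int l) 0 \<in> (\<lambda>v. restr v (- int l) 0) ` beh Q"
  proof -
    obtain mu0 nu0 xi0 where traj: "(mu0, nu0, xi0) \<in> full_beh Q"
      and "window nu 0 1 = window nu0 0 1"
      using initial_prefix[of 0] assms unfolding initial_windows_def by auto
    moreover have "restr (signal nu') (- int l) 0 = replicate l None @ window nu' 0 1" for nu' :: "nat \<Rightarrow> 'y"
      using restr_signal[of nu' 0 l] by simp
    ultimately have "restr (signal nu) (- int l) 0 = restr (signal nu0) (- int l) 0"
      by simp
    moreover have "signal nu0 \<in> beh Q"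
      unfolding mem_beh_iff using traj by blast
    ultimately show ?thesis by blast
  qed
  moreover have "signal nu k \<in> Some ` Ys Q" if "k \<ge> 0" for k
    using mem_Ys_if_window_mem_windows[OF windows[of "nat k"]] that unfolding signal_def by simp
  ultimately show ?thesis
    unfolding salca_def by (simp add: signal_def)
qed

lemma salca_eq: "1 \<le> l \<Longrightarrow> salca Q l = signal ` Collect (windows_admissible Q l)"
  using salca_subset signal_mem_salca by blast

section \<open>Kernel partitions\<close>

lemma Td_subset: "wf_sm Q \<Longrightarrow> Td Q x \<subseteq> Xs Q"
  unfolding wf_sm_def Td_def Fd_def by auto

definition kernel_partition :: "'a set \<Rightarrow> ('a \<Rightarrow> 'b) \<Rightarrow> 'a set set" where
  "kernel_partition X f = (\<lambda>x. {x' \<in> X. f x' = f x}) ` X"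

lemma kernel_partition_eq_iff:
  "kernel_partition X f = kernel_partition X g \<longleftrightarrow> (\<forall>x\<in>X. \<forall>x'\<in>X. f x = f x' \<longleftrightarrow> g x = g x')"
proof
  assume eq: "kernel_partition X f = kernel_partition X g"
  show "\<forall>x\<in>X. \<forall>x'\<in>X. f x = f x' \<longleftrightarrow> g x = g x'"
  proof (intro ballI)
    fix x x' assume "x \<in> X" "x' \<in> X"
    have "{z \<in> X. f z = f x} \<in> kernel_partition X g"
      using eq \<open>x \<in> X\<close> unfolding kernel_partition_def by blast
    then obtain a where "{z \<in> X. f z = f x} = {z \<in> X. g z = g a}"
      unfolding kernel_partition_def by blast
    moreover from this have "g x = g a" using \<open>x \<in> X\<close> by blast
    ultimately have "{z \<in> X. f z = f x} = {z \<in> X. g z = g x}" by simp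
    then have "x' \<in> {z \<in> X. f z = f x} \<longleftrightarrow> x' \<in> {z \<in> X. g z = g x}" by simp
    then show "f x = f x' \<longleftrightarrow> g x = g x'"
      using \<open>x' \<in> X\<close> by auto
  qed
next
  assume "\<forall>x\<in>X. \<forall>x'\<in>X. f x = f x' \<longleftrightarrow> g x = g x'"
  then have "\<And>x. x \<in> X \<Longrightarrow> {x' \<in> X. f x' = f x} = {x' \<in> X. g x' = g x}" by blast
  then show "kernel_partition X f = kernel_partition X g"
    unfolding kernel_partition_def by (rule image_cong[OF refl])
qed

lemma kernel_partition_cong: "(\<And>x. x \<in> X \<Longrightarrow> f x = g x) \<Longrightarrow> kernel_partition X f = kernel_partition X g"
  unfolding kernel_partition_eq_iff by simp

lemma kernel_partition_pair_eq_iff: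
  "kernel_partition X (\<lambda>x. (f x, g x)) = kernel_partition X f \<longleftrightarrow>
    (\<forall>x\<in>X. \<forall>x'\<in>X. f x = f x' \<longrightarrow> g x = g x')"
  unfolding kernel_partition_eq_iff by auto

lemma Phi_1_eq_kernel_partition:
  assumes "wf_sm Q"
  shows "Phi Q (Suc 0) = kernel_partition (Xs Q) (Hd Q)"
proof (intro set_eqI iffI)
  fix C assume "C \<in> Phi Q (Suc 0)"
  then obtain V x where "C = Hinv Q V" "x \<in> C" by auto
  then have "x \<in> Xs Q" and "C = {x' \<in> Xs Q. Hd Q x' = Hd Q x}"
    unfolding Hinv_def by auto
  then show "C \<in> kernel_partition (Xs Q) (Hd Q)"
    unfolding kernel_partition_def by blast
next
  fix C assume "C \<in> kernel_partition (Xs Q) (Hd Q)"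
  then obtain x where "x \<in> Xs Q" and C: "C = Hinv Q (Hd Q x)"
    unfolding kernel_partition_def Hinv_def by blast
  moreover have "Hd Q x \<subseteq> Ys Q"
    using assms unfolding wf_sm_def Hd_def by auto
  moreover have "C \<noteq> {}"
    using \<open>x \<in> Xs Q\<close> C unfolding Hinv_def by auto
  ultimately show "C \<in> Phi Q (Suc 0)" by auto
qed

lemma Phi_Suc: "1 \<le> n \<Longrightarrow> Phi Q (Suc n) = phi_step Q (Phi Q n)"
  by (cases n) auto

definition Tinv_side :: "('x, 'u, 'y) sm \<Rightarrow> 'x \<Rightarrow> 'x set \<Rightarrow> 'x set" where
  "Tinv_side Q x Xi = (if x \<in> Tinv Q Xi then Tinv Q Xi else Xs Q - Tinv Q Xi)"

lemma kernel_class_inter_Tinv_sides: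
  assumes "wf_sm Q" and "x \<in> Xs Q"
  shows "{x' \<in> Xs Q. f x' = f x} \<inter> (\<Inter>Xi\<in>kernel_partition (Xs Q) f. Tinv_side Q x Xi) =
    {x' \<in> Xs Q. (f x', f ` Td Q x') = (f x, f ` Td Q x)}"
proof -
  let ?K = "\<lambda>z. {x' \<in> Xs Q. f x' = f z}"
  have mem_side: "x' \<in> Tinv_side Q x Xi \<longleftrightarrow> (x' \<in> Tinv Q Xi \<longleftrightarrow> x \<in> Tinv Q Xi)" if "x' \<in> Xs Q" for x' Xi
    using that unfolding Tinv_side_def Tinv_def by auto
  have Tinv_K: "y \<in> Tinv Q (?K z) \<longleftrightarrow> f z \<in> f ` Td Q y" if "y \<in> Xs Q" for y z
    unfolding image_iff using that Td_subset[OF assms(1), of y] unfolding Tinv_def by (auto 0 3)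
  have sides: "(\<forall>Xi\<in>kernel_partition (Xs Q) f. x' \<in> Tinv_side Q x Xi) \<longleftrightarrow> f ` Td Q x' = f ` Td Q x"
    if "x' \<in> Xs Q" for x'
  proof -
    have "(\<forall>Xi\<in>kernel_partition (Xs Q) f. x' \<in> Tinv_side Q x Xi) \<longleftrightarrow>
        (\<forall>z\<in>Xs Q. x' \<in> Tinv Q (?K z) \<longleftrightarrow> x \<in> Tinv Q (?K z))"
      using that by (simp add: kernel_partition_def mem_side)
    also have "\<dots> \<longleftrightarrow> (\<forall>v\<in>f ` Xs Q. v \<in> f ` Td Q x' \<longleftrightarrow> v \<in> f ` Td Q x)"
      using that assms(2) by (simp add: Tinv_K)
    also have "\<dots> \<longleftrightarrow> f ` Td Q x' = f ` Td Q x"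
      using Td_subset[OF assms(1), of x] Td_subset[OF assms(1), of x'] by blast
    finally show ?thesis .
  qed
  show ?thesis
    by (rule set_eqI) (simp add: sides cong: conj_cong)
qed

lemma phi_step_kernel_partition:
  assumes "wf_sm Q"
  shows "phi_step Q (kernel_partition (Xs Q) f) = kernel_partition (Xs Q) (\<lambda>x. (f x, f ` Td Q x))"
proof (intro set_eqI iffI)
  let ?P = "kernel_partition (Xs Q) f"
  fix C assume "C \<in> phi_step Q ?P"
  then obtain Xi A where "C \<noteq> {}" "Xi \<in> ?P"
    and A: "\<forall>Xi'\<in>?P. A Xi' = Tinv Q Xi' \<or> A Xi' = Xs Q - Tinv Q Xi'"
    and C: "C = Xi \<inter> (\<Inter>Xi'\<in>?P. A Xi')"
    unfolding phi_step_def by blast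
  then obtain x where "x \<in> C" by blast
  then have "x \<in> Xs Q" and "Xi = {x' \<in> Xs Q. f x' = f x}"
    using \<open>Xi \<in> ?P\<close> C unfolding kernel_partition_def by auto
  have "A Xi' = Tinv_side Q x Xi'" if "Xi' \<in> ?P" for Xi'
    using A that \<open>x \<in> C\<close> C unfolding Tinv_side_def by auto
  then have "(\<Inter>Xi'\<in>?P. A Xi') = (\<Inter>Xi'\<in>?P. Tinv_side Q x Xi')"
    by simp
  with C \<open>Xi = _\<close> have "C = {x' \<in> Xs Q. (f x', f ` Td Q x') = (f x, f ` Td Q x)}"
    using kernel_class_inter_Tinv_sides[OF assms \<open>x \<in> Xs Q\<close>] by simp
  then show "C \<in> kernel_partition (Xs Q) (\<lambda>x. (f x, f ` Td Q x))"
    using \<open>x \<in> Xs Q\<close> unfolding kernel_partition_def by blast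
next
  let ?P = "kernel_partition (Xs Q) f"
  fix C assume "C \<in> kernel_partition (Xs Q) (\<lambda>x. (f x, f ` Td Q x))"
  then obtain x where "x \<in> Xs Q" and C: "C = {x' \<in> Xs Q. (f x', f ` Td Q x') = (f x, f ` Td Q x)}"
    unfolding kernel_partition_def by blast
  then have "C = {x' \<in> Xs Q. f x' = f x} \<inter> (\<Inter>Xi'\<in>?P. Tinv_side Q x Xi')" and "C \<noteq> {}"
    unfolding kernel_class_inter_Tinv_sides[OF assms \<open>x \<in> Xs Q\<close>] by auto
  moreover have "{x' \<in> Xs Q. f x' = f x} \<in> ?P"
    and "\<forall>Xi'\<in>?P. Tinv_side Q x Xi' = Tinv Q Xi' \<or> Tinv_side Q x Xi' = Xs Q - Tinv Q Xi'"
    using \<open>x \<in> Xs Q\<close> unfolding kernel_partition_def Tinv_side_def by auto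
  ultimately show "C \<in> phi_step Q ?P"
    unfolding phi_step_def by blast
qed

lemma simrel_graphI:
  assumes "X0s Q1 \<subseteq> S" and "g ` X0s Q1 \<subseteq> X0s Q2"
    and "\<And>s u y s'. s \<in> S \<Longrightarrow> (s, u, y, s') \<in> dlt Q1 \<Longrightarrow> s' \<in> S \<and> (g s, u, y, g s') \<in> dlt Q2"
  shows "simrel piV Q1 Q2 {(s, g s) | s. s \<in> S}"
  unfolding simrel_def using assms by blast

lemma simrel_relcomp:
  assumes R: "simrel piV Q1 Q2 R" and R': "simrel piV Q2 Q3 R'"
  shows "simrel piV Q1 Q3 (R O R')"
  unfolding simrel_def
proof (intro conjI ballI allI impI; clarify?)
  fix x1 assume "x1 \<in> X0s Q1"
  then obtain x2 where "x2 \<in> X0s Q2" "(x1, x2) \<in> R" using R unfolding simrel_def by blast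
  moreover from this obtain x3 where "x3 \<in> X0s Q3" "(x2, x3) \<in> R'" using R' unfolding simrel_def by blast
  ultimately show "\<exists>x3\<in>X0s Q3. (x1, x3) \<in> R O R'" by blast
next
  fix x1 x2 x3 u1 y1 x1'
  assume "(x1, x2) \<in> R" "(x2, x3) \<in> R'" "(x1, u1, y1, x1') \<in> dlt Q1"
  then obtain u2 y2 x2' where "(x2, u2, y2, x2') \<in> dlt Q2" "(x1', x2') \<in> R" "piV (u1, y1) = piV (u2, y2)"
    using R unfolding simrel_def by blast
  moreover from this \<open>(x2, x3) \<in> R'\<close> obtain u3 y3 x3'
    where "(x3, u3, y3, x3') \<in> dlt Q3" "(x2', x3') \<in> R'" "piV (u2, y2) = piV (u3, y3)"
    using R' unfolding simrel_def by blast
  ultimately show "\<exists>u3 y3 x3'. (x3, u3, y3, x3') \<in> dlt Q3 \<and> (x1', x3') \<in> R O R' \<and> piV (u1, y1) = piV (u3, y3)"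
    by auto
qed

locale standing_sm =
  fixes Q :: "('x, 'u, 'y) sm"
  assumes standing: "standing Q"
begin

lemma wf: "wf_sm Q"
  using standing unfolding standing_def by blast

lemma dlt_memD: "(x, u, y, x') \<in> dlt Q \<Longrightarrow> x \<in> Xs Q \<and> u \<in> Us Q \<and> y \<in> Ys Q \<and> x' \<in> Xs Q"
  using wf unfolding wf_sm_def by auto

lemma reachable: "x \<in> Xs Q \<Longrightarrow> \<exists>mu nu xi k. (mu, nu, xi) \<in> full_beh Q \<and> xi k = x"
  using standing unfolding standing_def live_reachable_def by fast

lemma live: "x \<in> X0s Q \<Longrightarrow> \<exists>mu nu xi. (mu, nu, xi) \<in> full_beh Q \<and> xi 0 = x"
  using standing unfolding standing_def live_reachable_def by fast

lemma Td_eq: "Td Q x = {x'. \<exists>u y. (x, u, y, x') \<in> dlt Q}"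
  unfolding Td_def Fd_def Hd_def by (auto dest: dlt_memD)

text \<open>Every transition lies on a trajectory: follow a trajectory to its source, take the transition,
  and continue along a trajectory through its target, re-indexed in time.\<close>
lemma transition_on_trajectory:
  assumes d: "(x, u, y, x') \<in> dlt Q"
  shows "\<exists>mu nu xi k. (mu, nu, xi) \<in> full_beh Q \<and> xi k = x \<and> mu k = u \<and> nu k = y \<and> xi (Suc k) = x'"
proof -
  have "x \<in> Xs Q" "x' \<in> Xs Q" using dlt_memD[OF d] by auto
  obtain m1 n1 s1 k1 where t1: "(m1, n1, s1) \<in> full_beh Q" and k1: "s1 k1 = x"
    using reachable[OF \<open>x \<in> Xs Q\<close>] by blast
  obtain m2 n2 s2 k2 where t2: "(m2, n2, s2) \<in> full_beh Q" and k2: "s2 k2 = x'"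
    using reachable[OF \<open>x' \<in> Xs Q\<close>] by blast
  define g where "g j = j - Suc k1 + k2" for j
  define s where "s j = (if j \<le> k1 then s1 j else s2 (g j))" for j
  define m where "m j = (if j < k1 then m1 j else if j = k1 then u else m2 (g j))" for j
  define n where "n j = (if j < k1 then n1 j else if j = k1 then y else n2 (g j))" for j
  have "(s j, m j, n j, s (Suc j)) \<in> dlt Q" for j
  proof (cases rule: linorder_cases[of j k1])
    case less
    then show ?thesis using full_beh_dlt[OF t1, of j] by (simp add: m_def n_def s_def)
  next
    case equal
    then show ?thesis using d k1 k2 by (simp add: m_def n_def s_def g_def)
  next
    case greater
    then have "g (Suc j) = Suc (g j)" by (simp add: g_def)
    then show ?thesis using full_beh_dlt[OF t2, of "g j"] greater by (simp add: m_def n_def s_def)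
  qed
  moreover have "s 0 \<in> X0s Q" using full_beh_X0s[OF t1] by (simp add: s_def)
  ultimately have "(m, n, s) \<in> full_beh Q"
    using mem_full_beh_iff[OF wf] by blast
  moreover have "s k1 = x" "m k1 = u" "n k1 = y" "s (Suc k1) = x'"
    using k1 k2 by (auto simp: s_def m_def n_def g_def)
  ultimately show ?thesis by blast
qed

lemma Td_nonempty:
  assumes "x \<in> Xs Q"
  shows "Td Q x \<noteq> {}"
proof -
  obtain mu nu xi k where "(mu, nu, xi) \<in> full_beh Q" "xi k = x"
    using reachable[OF assms] by blast
  then have "xi (Suc k) \<in> Td Q x"
    unfolding Td_eq using full_beh_dlt by blast
  then show ?thesis by blast
qed

end

section \<open>Future-unique machines\<close>

locale future_unique_sm = standing_sm Q for Q :: "('x, 'u, 'y) sm" +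
  fixes l :: nat
  assumes l_pos: "1 \<le> l" and future_unique: "future_unique Q l l"
begin

text \<open>Only meaningful for \<open>x \<in> Xs Q\<close>: otherwise \<open>EI Q l l x\<close> is empty.\<close>
definition future :: "'x \<Rightarrow> 'y option list" where
  "future x = (THE z. z \<in> EI Q l l x)"

lemma EI_unique:
  assumes "x \<in> Xs Q" "z \<in> EI Q l l x" "z' \<in> EI Q l l x"
  shows "z = z'"
proof -
  have "sres z (int l - int l) (int l - 1) = sres z' (int l - int l) (int l - 1)"
    using future_unique assms unfolding future_unique_def by blast
  moreover have "length z = l" "length z' = l"
    using assms unfolding EI_l_l_eq by auto
  ultimately show ?thesis
    using sres_0_eq_take[of "int l - 1" z] sres_0_eq_take[of "int l - 1" z'] by simp
qed

lemma future_trajectory: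
  assumes "(mu, nu, xi) \<in> full_beh Q"
  shows "future (xi k) = window nu k l"
proof -
  have "window nu k l \<in> EI Q l l (xi k)"
    unfolding EI_l_l_eq using assms by blast
  moreover have "xi k \<in> Xs Q"
    using assms unfolding full_beh_def by blast
  ultimately show ?thesis
    unfolding future_def using EI_unique by blast
qed

lemma EI_eq_future:
  assumes "x \<in> Xs Q"
  shows "EI Q l l x = {future x}"
proof -
  obtain mu nu xi k where traj: "(mu, nu, xi) \<in> full_beh Q" and "xi k = x"
    using reachable[OF assms] by blast
  then have "future x \<in> EI Q l l x"
    unfolding EI_l_l_eq using future_trajectory[OF traj, of k] by blast
  then show ?thesis
    using EI_unique[OF assms] by blast
qed

lemma length_future:
  assumes "x \<in> Xs Q"
  shows "length (future x) = l"
proof -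
  obtain mu nu xi k where "(mu, nu, xi) \<in> full_beh Q" and "xi k = x"
    using reachable[OF assms] by blast
  then show ?thesis
    using future_trajectory by fastforce
qed

lemma future_transition:
  assumes "(x, u, y, x') \<in> dlt Q"
  shows "future x = Some y # take (l - 1) (future x')"
proof -
  obtain mu nu xi k where traj: "(mu, nu, xi) \<in> full_beh Q"
    and "xi k = x" "nu k = y" "xi (Suc k) = x'"
    using transition_on_trajectory[OF assms] by blast
  then have "future x = window nu k (Suc (l - 1))" and "future x' = window nu (Suc k) l"
    using future_trajectory[OF traj] l_pos by auto
  then show ?thesis
    using \<open>nu k = y\<close> by (simp add: window_Suc)
qed

lemma Some_Hd_eq_future:
  assumes "x \<in> Xs Q"
  shows "Some ` Hd Q x = {hd (future x)}"
proof -
  have hd_future: "hd (future x) = Some y" if "y \<in> Hd Q x" for y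
  proof -
    obtain u x' where "(x, u, y, x') \<in> dlt Q"
      using \<open>y \<in> Hd Q x\<close> unfolding Hd_def by blast
    then show ?thesis by (simp add: future_transition)
  qed
  obtain x' where "x' \<in> Td Q x"
    using Td_nonempty[OF assms] by blast
  then obtain u y where "(x, u, y, x') \<in> dlt Q"
    unfolding Td_eq by blast
  then have "y \<in> Hd Q x"
    unfolding Hd_def by blast
  show ?thesis
  proof (intro set_eqI iffI)
    fix v assume "v \<in> Some ` Hd Q x"
    then show "v \<in> {hd (future x)}" using hd_future by auto
  next
    fix v assume "v \<in> {hd (future x)}"
    then have "v = Some y" using hd_future[OF \<open>y \<in> Hd Q x\<close>] by simp
    then show "v \<in> Some ` Hd Q x" using \<open>y \<in> Hd Q x\<close> by blast
  qed
qed

lemma Xs_absQ: "Xs (absQ Q l l) = future ` Xs Q"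
  by (simp add: absQ_def EI_eq_future UNION_singleton_eq_range)

lemma X0s_absQ: "X0s (absQ Q l l) = future ` X0s Q"
proof -
  have "X0s Q \<subseteq> Xs Q" using wf unfolding wf_sm_def by blast
  then show ?thesis
    by (simp add: absQ_def EI_eq_future UNION_singleton_eq_range subset_iff)
qed

lemma Xs_quotQ: "Xs (quotQ Q l) = (\<lambda>x. {future x}) ` Xs Q"
  by (simp add: quotQ_def Setcompr_eq_image EI_eq_future)

lemma X0s_quotQ: "X0s (quotQ Q l) = (\<lambda>x. {future x}) ` X0s Q"
proof -
  have "X0s Q \<subseteq> Xs Q" using wf unfolding wf_sm_def by blast
  then show ?thesis
    by (simp add: quotQ_def Setcompr_eq_image EI_eq_future subset_iff)
qed

lemma dlt_quotQ_iff:
  "(V, u, y, V') \<in> dlt (quotQ Q l) \<longleftrightarrow> (\<exists>x x'. V = {future x} \<and> V' = {future x'} \<and> (x, u, y, x') \<in> dlt Q)"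
proof
  assume "(V, u, y, V') \<in> dlt (quotQ Q l)"
  then obtain x x' where "V = EI Q l l x" "V' = EI Q l l x'" and d: "(x, u, y, x') \<in> dlt Q"
    by (auto simp: quotQ_def)
  then show "\<exists>x x'. V = {future x} \<and> V' = {future x'} \<and> (x, u, y, x') \<in> dlt Q"
    using dlt_memD[OF d] EI_eq_future by blast
next
  assume "\<exists>x x'. V = {future x} \<and> V' = {future x'} \<and> (x, u, y, x') \<in> dlt Q"
  then obtain x x' where "V = {future x}" "V' = {future x'}" and d: "(x, u, y, x') \<in> dlt Q"
    by blast
  then have "V = EI Q l l x" "V' = EI Q l l x'"
    using dlt_memD[OF d] EI_eq_future by auto
  then show "(V, u, y, V') \<in> dlt (quotQ Q l)"
    unfolding quotQ_def using d by auto
qed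

text \<open>Under future uniqueness the two shift conditions in the definition of \<open>absQ\<close> are implied by the
  third one, since the future of the source is the output followed by the future of the target.\<close>
lemma dlt_absQ_iff:
  "(z, u, y, z') \<in> dlt (absQ Q l l) \<longleftrightarrow> (\<exists>x x'. z = future x \<and> z' = future x' \<and> (x, u, y, x') \<in> dlt Q)"
proof
  assume "(z, u, y, z') \<in> dlt (absQ Q l l)"
  then obtain x x' where "z \<in> EI Q l l x" "z' \<in> EI Q l l x'" and d: "(x, u, y, x') \<in> dlt Q"
    by (auto simp: absQ_def)
  then show "\<exists>x x'. z = future x \<and> z' = future x' \<and> (x, u, y, x') \<in> dlt Q"
    using dlt_memD[OF d] EI_eq_future by blast
next
  assume "\<exists>x x'. z = future x \<and> z' = future x' \<and> (x, u, y, x') \<in> dlt Q"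
  then obtain x x' where z: "z = future x" and z': "z' = future x'" and d: "(x, u, y, x') \<in> dlt Q"
    by blast
  then have "length z = l" "length z' = l"
    using dlt_memD[OF d] length_future by auto
  moreover have "z = Some y # take (l - 1) z'"
    using future_transition[OF d] z z' by simp
  moreover have "nat (int l - 1 + 1) = l" "nat (int l - 2 + 1) = l - 1"
    using l_pos by auto
  ultimately have "sres z (int l - int l) (int l - 1) = sres ([Some y] @ sres z' (int l - int l) (int l - 2)) 0 (int l - 1)"
    using l_pos by (simp add: sres_0_eq_take)
  moreover have "sres z' 0 (int l - int l - 1) = sres (sres z 0 (int l - int l - 1) @ [Some y]) 1 (int l - int l)"
    by (simp add: sres_def)
  moreover have "z \<in> EI Q l l x" "z' \<in> EI Q l l x'"
    using dlt_memD[OF d] z z' EI_eq_future by auto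
  ultimately show "(z, u, y, z') \<in> dlt (absQ Q l l)"
    unfolding absQ_def using d by auto
qed

lemma simrel_absQ_quotQ: "simrel piV (absQ Q l l) (quotQ Q l) {(z, {z}) | z. z \<in> Xs (absQ Q l l)}"
proof (rule simrel_graphI)
  show "X0s (absQ Q l l) \<subseteq> Xs (absQ Q l l)"
    using wf unfolding wf_sm_def Xs_absQ X0s_absQ by auto
  show "(\<lambda>z. {z}) ` X0s (absQ Q l l) \<subseteq> X0s (quotQ Q l)"
    unfolding X0s_absQ X0s_quotQ by auto
next
  fix z u y z' assume "(z, u, y, z') \<in> dlt (absQ Q l l)"
  then show "z' \<in> Xs (absQ Q l l) \<and> ({z}, u, y, {z'}) \<in> dlt (quotQ Q l)"
    unfolding dlt_absQ_iff dlt_quotQ_iff Xs_absQ using dlt_memD by fast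
qed

lemma simrel_quotQ_absQ: "simrel piV (quotQ Q l) (absQ Q l l) {(V, the_elem V) | V. V \<in> Xs (quotQ Q l)}"
proof (rule simrel_graphI)
  show "X0s (quotQ Q l) \<subseteq> Xs (quotQ Q l)"
    using wf unfolding wf_sm_def Xs_quotQ X0s_quotQ by auto
  show "the_elem ` X0s (quotQ Q l) \<subseteq> X0s (absQ Q l l)"
    unfolding X0s_absQ X0s_quotQ by auto
next
  fix V u y V' assume "(V, u, y, V') \<in> dlt (quotQ Q l)"
  then show "V' \<in> Xs (quotQ Q l) \<and> (the_elem V, u, y, the_elem V') \<in> dlt (absQ Q l l)"
    unfolding dlt_absQ_iff dlt_quotQ_iff Xs_quotQ using dlt_memD by fastforce
qed

lemma abs_quot_rel_eq:
  "{(z, V). z \<in> Xs (absQ Q l l) \<and> V \<in> Xs (quotQ Q l) \<and> V = {z}} = {(z, {z}) | z. z \<in> Xs (absQ Q l l)}"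
  unfolding Xs_absQ Xs_quotQ by blast

lemma abs_quot_rel_converse_eq:
  "{(z, V). z \<in> Xs (absQ Q l l) \<and> V \<in> Xs (quotQ Q l) \<and> V = {z}}\<inverse> = {(V, the_elem V) | V. V \<in> Xs (quotQ Q l)}"
  unfolding Xs_absQ Xs_quotQ by fastforce

text \<open>The two machines are isomorphic, so a simulation relation into \<open>Q\<close> transfers from one to the other
  by composing with the isomorphism.\<close>
lemma simrel_absQ_iff_simrel_quotQ:
  "simrel piV (absQ Q l l) Q ({(x, z). x \<in> Xs Q \<and> z \<in> Xs (absQ Q l l) \<and> z \<in> EI Q l l x}\<inverse>) \<longleftrightarrow>
   simrel piV (quotQ Q l) Q ({(x, V). x \<in> Xs Q \<and> V \<in> Xs (quotQ Q l) \<and> V = EI Q l l x}\<inverse>)"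
  (is "simrel piV _ Q ?R_abs \<longleftrightarrow> simrel piV _ Q ?R_quot")
proof -
  have R_abs: "?R_abs = {(future x, x) | x. x \<in> Xs Q}"
    unfolding Xs_absQ by (auto simp: EI_eq_future)
  have R_quot: "?R_quot = {({future x}, x) | x. x \<in> Xs Q}"
    unfolding Xs_quotQ by (auto simp: EI_eq_future)
  have quot_comp: "{({future x}, x) | x. x \<in> Xs Q} =
      {(V, the_elem V) | V. V \<in> Xs (quotQ Q l)} O {(future x, x) | x. x \<in> Xs Q}"
    unfolding Xs_quotQ by auto
  have abs_comp: "{(future x, x) | x. x \<in> Xs Q} =
      {(z, {z}) | z. z \<in> Xs (absQ Q l l)} O {({future x}, x) | x. x \<in> Xs Q}"
    unfolding Xs_absQ by auto
  show ?thesis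
    unfolding R_abs R_quot
  proof
    assume "simrel piV (absQ Q l l) Q {(future x, x) | x. x \<in> Xs Q}"
    with simrel_quotQ_absQ show "simrel piV (quotQ Q l) Q {({future x}, x) | x. x \<in> Xs Q}"
      unfolding quot_comp by (rule simrel_relcomp)
  next
    assume "simrel piV (quotQ Q l) Q {({future x}, x) | x. x \<in> Xs Q}"
    with simrel_absQ_quotQ show "simrel piV (absQ Q l l) Q {(future x, x) | x. x \<in> Xs Q}"
      unfolding abs_comp by (rule simrel_relcomp)
  qed
qed

lemma image_take_future_Td:
  assumes "x \<in> Xs Q" and "n < l"
  shows "(\<lambda>z. take n (future z)) ` Td Q x = {take n (tl (future x))}"
proof -
  have "take n (future z) = take n (tl (future x))" if z: "z \<in> Td Q x" for z
  proof -
    obtain u y where "(x, u, y, z) \<in> dlt Q" using z unfolding Td_eq by blast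
    then show ?thesis
      using assms(2) by (simp add: future_transition)
  qed
  then have "(\<lambda>z. take n (future z)) ` Td Q x = (\<lambda>z. take n (tl (future x))) ` Td Q x"
    by (rule image_cong[OF refl])
  then show ?thesis
    using Td_nonempty[OF assms(1)] by (simp add: image_constant_conv)
qed

lemma Phi_eq_kernel_partition_take:
  "1 \<le> n \<Longrightarrow> n \<le> l \<Longrightarrow> Phi Q n = kernel_partition (Xs Q) (\<lambda>x. take n (future x))"
proof (induction n rule: nat_induct_at_least)
  case base
  have "Hd Q x = Hd Q x' \<longleftrightarrow> take 1 (future x) = take 1 (future x')"
    if "x \<in> Xs Q" "x' \<in> Xs Q" for x x'
  proof -
    have "Hd Q x = Hd Q x' \<longleftrightarrow> Some ` Hd Q x = Some ` Hd Q x'"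
      by (simp add: inj_image_eq_iff)
    moreover have "future x \<noteq> []" "future x' \<noteq> []"
      using length_future[OF that(1)] length_future[OF that(2)] l_pos by auto
    ultimately show ?thesis
      using that by (simp add: Some_Hd_eq_future take_Suc)
  qed
  then have "kernel_partition (Xs Q) (Hd Q) = kernel_partition (Xs Q) (\<lambda>x. take 1 (future x))"
    unfolding kernel_partition_eq_iff by simp
  then show ?case
    using Phi_1_eq_kernel_partition[OF wf] by simp
next
  case (Suc n)
  have "Phi Q (Suc n) = phi_step Q (kernel_partition (Xs Q) (\<lambda>x. take n (future x)))"
    using Phi_Suc[of n Q] Suc by simp
  also have "\<dots> = kernel_partition (Xs Q) (\<lambda>x. (take n (future x), (\<lambda>z. take n (future z)) ` Td Q x))"
    by (rule phi_step_kernel_partition[OF wf])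
  also have "\<dots> = kernel_partition (Xs Q) (\<lambda>x. (take n (future x), {take n (tl (future x))}))"
    using Suc by (intro kernel_partition_cong) (simp add: image_take_future_Td)
  also have "\<dots> = kernel_partition (Xs Q) (\<lambda>x. take (Suc n) (future x))"
    using Suc by (simp add: kernel_partition_eq_iff take_Suc_eq_iff)
  finally show ?case .
qed

lemma Phi_l_eq: "Phi Q l = kernel_partition (Xs Q) future"
proof -
  have "Phi Q l = kernel_partition (Xs Q) (\<lambda>x. take l (future x))"
    using Phi_eq_kernel_partition_take l_pos by simp
  also have "\<dots> = kernel_partition (Xs Q) future"
    by (rule kernel_partition_cong) (simp add: length_future)
  finally show ?thesis .
qed

lemma Phi_Suc_l_eq_Phi_l_iff:
  "Phi Q (Suc l) = Phi Q l \<longleftrightarrow>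
    (\<forall>x\<in>Xs Q. \<forall>x'\<in>Xs Q. future x = future x' \<longrightarrow> future ` Td Q x = future ` Td Q x')"
proof -
  have "Phi Q (Suc l) = kernel_partition (Xs Q) (\<lambda>x. (future x, future ` Td Q x))"
    using Phi_Suc[OF l_pos, of Q] unfolding Phi_l_eq by (simp add: phi_step_kernel_partition[OF wf])
  then show ?thesis
    unfolding Phi_l_eq by (simp add: kernel_partition_pair_eq_iff)
qed

lemma Ecs_Suc_l_eq: "Ecs Q 0 (int l) x = (\<lambda>z. hd (future x) # future z) ` Td Q x"
proof -
  have "nat (int l + 1) = Suc l" by simp
  then have Ecs: "Ecs Q 0 (int l) x = {window nu k (Suc l) | mu nu xi k. (mu, nu, xi) \<in> full_beh Q \<and> xi k = x}"
    by (simp add: Ecs_0_eq)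
  have window: "window nu k (Suc l) = hd (future (xi k)) # future (xi (Suc k))" if "(mu, nu, xi) \<in> full_beh Q"
    for mu nu xi k
  proof -
    have "hd (future (xi k)) = Some (nu k)"
      using future_trajectory[OF that, of k] l_pos by (cases l) (simp_all add: window_Suc)
    then show ?thesis
      using future_trajectory[OF that, of "Suc k"] by (simp add: window_Suc)
  qed
  show ?thesis
  proof (intro set_eqI iffI)
    fix s assume "s \<in> Ecs Q 0 (int l) x"
    then obtain mu nu xi k where traj: "(mu, nu, xi) \<in> full_beh Q" and "xi k = x" and s: "s = window nu k (Suc l)"
      unfolding Ecs by blast
    moreover have "xi (Suc k) \<in> Td Q x"
      unfolding Td_eq using full_beh_dlt[OF traj] \<open>xi k = x\<close> by blast
    ultimately show "s \<in> (\<lambda>z. hd (future x) # future z) ` Td Q x"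
      using window by blast
  next
    fix s assume "s \<in> (\<lambda>z. hd (future x) # future z) ` Td Q x"
    then obtain z u y where d: "(x, u, y, z) \<in> dlt Q" and s: "s = hd (future x) # future z"
      unfolding Td_eq by blast
    obtain mu nu xi k where traj: "(mu, nu, xi) \<in> full_beh Q" and "xi k = x" "xi (Suc k) = z"
      using transition_on_trajectory[OF d] by blast
    then have "s = window nu k (Suc l)"
      unfolding s using window[OF traj, of k] by simp
    then show "s \<in> Ecs Q 0 (int l) x"
      unfolding Ecs using traj \<open>xi k = x\<close> by blast
  qed
qed

lemma windows_Suc_l_eq: "windows Q (Suc l) = (\<Union>x. (\<lambda>z. hd (future x) # future z) ` Td Q x)"
  unfolding windows_Suc_eq_Union_Ecs Ecs_Suc_l_eq ..

lemma take_hd_future_Cons_future: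
  assumes "z \<in> Td Q x"
  shows "take l (hd (future x) # future z) = future x"
proof -
  obtain u y where "(x, u, y, z) \<in> dlt Q" using assms unfolding Td_eq by blast
  then have "future x = Some y # take (l - 1) (future z)" by (rule future_transition)
  moreover obtain m where "l = Suc m" using l_pos by (cases l) auto
  ultimately show ?thesis by simp
qed

text \<open>A string of \<open>\<Pi>\<^sub>l\<^sub>+\<^sub>1\<close> extending the future of a state cannot start with \<open>\<diamond>\<close>.\<close>
lemma Pi_l_extending_future_iff_windows:
  assumes "x \<in> Xs Q"
  shows "\<zeta> \<in> Pi_l (Suc l) (beh Q) \<and> take l \<zeta> = future x \<longleftrightarrow> \<zeta> \<in> windows Q (Suc l) \<and> take l \<zeta> = future x"
proof -
  have "hd \<zeta> \<noteq> None" if "take l \<zeta> = future x"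
  proof -
    have "hd (take l \<zeta>) = hd \<zeta>"
      using l_pos by (cases \<zeta>; cases l) auto
    then have "hd \<zeta> = hd (future x)"
      using that by simp
    moreover have "hd (future x) \<in> Some ` Hd Q x"
      using Some_Hd_eq_future[OF assms] by simp
    ultimately show ?thesis by auto
  qed
  then show ?thesis
    using windows_subset_Pi_l mem_windows_if_mem_Pi_l by blast
qed

lemma windows_extending_future_in_Ecs_iff:
  "(\<forall>\<zeta>\<in>windows Q (Suc l). take l \<zeta> = future x' \<longrightarrow> \<zeta> \<in> Ecs Q 0 (int l) x') \<longleftrightarrow>
    (\<forall>x\<in>Xs Q. future x = future x' \<longrightarrow> future ` Td Q x \<subseteq> future ` Td Q x')"
proof -
  have "(\<forall>\<zeta>\<in>windows Q (Suc l). take l \<zeta> = future x' \<longrightarrow> \<zeta> \<in> Ecs Q 0 (int l) x') \<longleftrightarrow>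
      (\<forall>x. \<forall>z\<in>Td Q x. future x = future x' \<longrightarrow>
        hd (future x) # future z \<in> (\<lambda>z. hd (future x') # future z) ` Td Q x')"
    unfolding windows_Suc_l_eq Ecs_Suc_l_eq by (simp add: take_hd_future_Cons_future)
  also have "\<dots> \<longleftrightarrow> (\<forall>x. \<forall>z\<in>Td Q x. future x = future x' \<longrightarrow> future z \<in> future ` Td Q x')"
    by auto
  also have "\<dots> \<longleftrightarrow> (\<forall>x\<in>Xs Q. future x = future x' \<longrightarrow> future ` Td Q x \<subseteq> future ` Td Q x')"
    using dlt_memD unfolding Td_eq by blast
  finally show ?thesis .
qed

lemma async_complete_iff:
  "async_complete Q l l \<longleftrightarrow>
    (\<forall>x\<in>Xs Q. \<forall>x'\<in>Xs Q. future x = future x' \<longrightarrow> future ` Td Q x \<subseteq> future ` Td Q x')"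
proof -
  have "sres \<zeta> (int l - int l) (int l - 1) \<in> EI Q l l x \<longleftrightarrow> take l \<zeta> = future x"
    if "x \<in> Xs Q" "\<zeta> \<in> Pi_l (Suc l) (beh Q)" for x \<zeta>
    using that length_Pi_l[OF that(2)] by (simp add: EI_eq_future sres_0_eq_take)
  then have "async_complete Q l l \<longleftrightarrow>
      (\<forall>x'\<in>Xs Q. \<forall>\<zeta>. \<zeta> \<in> Pi_l (Suc l) (beh Q) \<and> take l \<zeta> = future x' \<longrightarrow> \<zeta> \<in> Ecs Q 0 (int l) x')"
    unfolding async_complete_def by auto
  also have "\<dots> \<longleftrightarrow>
      (\<forall>x'\<in>Xs Q. \<forall>\<zeta>\<in>windows Q (Suc l). take l \<zeta> = future x' \<longrightarrow> \<zeta> \<in> Ecs Q 0 (int l) x')"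
    using Pi_l_extending_future_iff_windows by blast
  finally show ?thesis
    unfolding windows_extending_future_in_Ecs_iff by blast
qed

lemma async_complete_iff_Phi_Suc_eq: "async_complete Q l l \<longleftrightarrow> Phi Q (Suc l) = Phi Q l"
  unfolding async_complete_iff Phi_Suc_l_eq_Phi_l_iff by (metis subset_antisym order_refl)

lemma initial_windows_l_eq: "initial_windows Q l = future ` X0s Q"
proof (intro set_eqI iffI)
  fix s assume "s \<in> initial_windows Q l"
  then obtain mu nu xi where traj: "(mu, nu, xi) \<in> full_beh Q" and "s = window nu 0 l"
    unfolding initial_windows_def by blast
  then have "s = future (xi 0)" using future_trajectory by simp
  then show "s \<in> future ` X0s Q" using full_beh_X0s[OF traj] by blast
next
  fix s assume "s \<in> future ` X0s Q"
  then obtain x where "x \<in> X0s Q" and s: "s = future x" by blast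
  then obtain mu nu xi where traj: "(mu, nu, xi) \<in> full_beh Q" and "xi 0 = x"
    using live by blast
  then have "s = window nu 0 l" using s future_trajectory by blast
  then show "s \<in> initial_windows Q l"
    unfolding initial_windows_def using traj by blast
qed

lemma quotQ_trajectory:
  assumes traj: "(mu, nu, sg) \<in> full_beh (quotQ Q l)"
  shows "sg k = {window nu k l}"
proof -
  define Z where "Z k = the_elem (sg k)" for k
  have Z: "sg k = {Z k} \<and> length (Z k) = l \<and> Z k = Some (nu k) # take (l - 1) (Z (Suc k))" for k
  proof -
    obtain b b' where "sg k = {future b}" "sg (Suc k) = {future b'}" and d: "(b, mu k, nu k, b') \<in> dlt Q"
      using full_beh_dlt[OF traj, of k] unfolding dlt_quotQ_iff by blast
    then show ?thesis
      using future_transition[OF d] length_future dlt_memD[OF d] l_pos by (simp add: Z_def)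
  qed
  have "Z k ! i = Some (nu (k + i))" if "i < l" for i
    using that
  proof (induction i arbitrary: k)
    case 0
    then show ?case using Z[of k] by simp
  next
    case (Suc i)
    then have "Z k ! Suc i = Z (Suc k) ! i" using Z[of k] by simp
    then show ?case using Suc by simp
  qed
  moreover have "length (Z k) = l" using Z by blast
  ultimately have "Z k = window nu k l"
    by (intro nth_equalityI) auto
  then show ?thesis using Z[of k] by simp
qed

lemma windows_admissible_if_quotQ_trajectory:
  assumes traj: "(mu, nu, sg) \<in> full_beh (quotQ Q l)"
  shows "windows_admissible Q l nu"
proof -
  obtain x0 where "x0 \<in> X0s Q" "sg 0 = {future x0}"
    using full_beh_X0s[OF traj] unfolding X0s_quotQ by blast
  then have "window nu 0 l \<in> initial_windows Q l"
    using quotQ_trajectory[OF traj, of 0] unfolding initial_windows_l_eq by simp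
  moreover have "window nu k (Suc l) \<in> windows Q (Suc l)" for k
  proof -
    obtain b b' where "sg k = {future b}" "sg (Suc k) = {future b'}" and d: "(b, mu k, nu k, b') \<in> dlt Q"
      using full_beh_dlt[OF traj, of k] unfolding dlt_quotQ_iff by blast
    then have "window nu k (Suc l) = hd (future b) # future b'"
      using quotQ_trajectory[OF traj] future_transition[OF d] by (simp add: window_Suc)
    moreover have "b' \<in> Td Q b" unfolding Td_eq using d by blast
    ultimately show ?thesis unfolding windows_Suc_l_eq by blast
  qed
  ultimately show ?thesis
    unfolding windows_admissible_def by blast
qed

lemma quotQ_trajectory_if_windows_admissible:
  assumes "windows_admissible Q l nu"
  shows "\<exists>mu. (mu, nu, \<lambda>k. {window nu k l}) \<in> full_beh (quotQ Q l)"
proof -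
  have initial: "window nu 0 l \<in> initial_windows Q l"
    and windows: "\<And>k. window nu k (Suc l) \<in> windows Q (Suc l)"
    using assms unfolding windows_admissible_def by auto
  have "\<exists>u. ({window nu k l}, u, nu k, {window nu (Suc k) l}) \<in> dlt (quotQ Q l)" for k
  proof -
    obtain x z where z: "z \<in> Td Q x" and eq: "window nu k (Suc l) = hd (future x) # future z"
      using windows[of k] unfolding windows_Suc_l_eq by blast
    then obtain u y where d: "(x, u, y, z) \<in> dlt Q" unfolding Td_eq by blast
    have "window nu k l = future x"
      using take_hd_future_Cons_future[OF z] eq by (metis lessI less_imp_le_nat take_window)
    moreover have "window nu (Suc k) l = future z" and "nu k = y"
      using eq future_transition[OF d] by (simp_all add: window_Suc)
    ultimately show ?thesis
      unfolding dlt_quotQ_iff using d by blast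
  qed
  then obtain mu where "\<And>k. ({window nu k l}, mu k, nu k, {window nu (Suc k) l}) \<in> dlt (quotQ Q l)"
    by metis
  moreover have "{window nu 0 l} \<in> X0s (quotQ Q l)"
    using initial unfolding initial_windows_l_eq X0s_quotQ by blast
  ultimately show ?thesis
    by (auto simp: mem_full_beh_iff[OF wf_quotQ[OF wf]])
qed

lemma beh_quotQ_eq: "beh (quotQ Q l) = signal ` Collect (windows_admissible Q l)"
  unfolding beh_eq_image
  using windows_admissible_if_quotQ_trajectory quotQ_trajectory_if_windows_admissible by blast

lemma beh_quotQ_eq_salca: "beh (quotQ Q l) = salca Q l"
  using beh_quotQ_eq salca_eq[OF l_pos, of Q] by simp

end

theorem proposition12:
  fixes Q :: "('x,'u,'y) sm" and l :: nat
  assumes "standing Q" and "l \<ge> 1" and "future_unique Q l l"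
  shows "beh (quotQ Q l) = salca Q l
    \<and> simrel piY (absQ Q l l) (quotQ Q l)
        {(zeta,V). zeta \<in> Xs (absQ Q l l) \<and> V \<in> Xs (quotQ Q l) \<and> V = {zeta}}
    \<and> simrel piY (quotQ Q l) (absQ Q l l)
        ({(zeta,V). zeta \<in> Xs (absQ Q l l) \<and> V \<in> Xs (quotQ Q l) \<and> V = {zeta}}\<inverse>)
    \<and> (simrel piY (absQ Q l l) Q ({(x,xh). x \<in> Xs Q \<and> xh \<in> Xs (absQ Q l l) \<and> xh \<in> EI Q l l x}\<inverse>)
        \<longleftrightarrow> simrel piY (quotQ Q l) Q ({(x,xh). x \<in> Xs Q \<and> xh \<in> Xs (quotQ Q l) \<and> xh = EI Q l l x}\<inverse>))
    \<and> (async_complete Q l l \<longleftrightarrow> Phi Q (l + 1) = Phi Q l)"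
proof -
  interpret future_unique_sm Q l
    using assms by unfold_locales auto
  have "simrel piY (absQ Q l l) (quotQ Q l)
      {(zeta, V). zeta \<in> Xs (absQ Q l l) \<and> V \<in> Xs (quotQ Q l) \<and> V = {zeta}}"
    unfolding abs_quot_rel_eq by (rule simrel_absQ_quotQ)
  moreover have "simrel piY (quotQ Q l) (absQ Q l l)
      ({(zeta, V). zeta \<in> Xs (absQ Q l l) \<and> V \<in> Xs (quotQ Q l) \<and> V = {zeta}}\<inverse>)"
    unfolding abs_quot_rel_converse_eq by (rule simrel_quotQ_absQ)
  ultimately show ?thesis
    using beh_quotQ_eq_salca simrel_absQ_iff_simrel_quotQ async_complete_iff_Phi_Suc_eq by simp
qed

end
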